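(* Let $G=(N,E)$ and $G'=(N,E')$ be DAGs with $\mathcal{P}^{G'}\supseteq\mathcal{P}^G$ and $G'\supseteq G^*$. Then $G'^\sim\supseteq G^{\mathrm{M}}$.
   Context: DAG: finite directed graph without directed cycles; $\mathrm{pa}_G(s)$ = parents of $s$. $G^*=(N,E^* )$ with $E^*=\{(t,s):(s,t)\in E\}$; $G'\supseteq G^*$ means $E'\supseteq E^*$. The undirected version is $G^\sim=(N,E\cup E^* )$. The moral graph is $G^{\mathrm{M}}=(N,E\cup E^*\cup\{(t_1,t_2):\exists s,\ t_1,t_2\in\mathrm{pa}_G(s),\ t_1\ne t_2\})$. Each node $s$ has a state space $\mathsf{X}_s$ (finite set with counting measure, or finite-dimensional real vector space with Lebesgue measure $\mu_s$), $\mu=\otimes_s\mu_s$; $\mathcal{P}^G$ is the set of probability distributions on $\times_s\mathsf{X}_s$ with $\mu$-density $p(x)=\prod_{s}k^s(x_s\mid x_{\mathrm{pa}_G(s)})$ for some nonnegative measurable $k^s$ with $\int k^s(x_s\mid x_{\mathrm{pa}_G(s)})\,d\mu_s(x_s)=1$. *)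

theory Defs
  imports "HOL-Probability.Probability"
begin

text \<open>All state spaces live in the common
  carrier type nat => real: a finite state space is a finite set with counting
  measure; R^d is the product of d copies of lborel on coordinates 0..d-1.\<close>

definition pa :: "('n \<times> 'n) set \<Rightarrow> 'n \<Rightarrow> 'n set" where
  "pa E s = {t. (t, s) \<in> E}"

definition undirected :: "('n \<times> 'n) set \<Rightarrow> ('n \<times> 'n) set" where
  "undirected E = E \<union> E\<inverse>"

definition moral :: "('n \<times> 'n) set \<Rightarrow> ('n \<times> 'n) set" where
  "moral E = E \<union> E\<inverse> \<union> {(t1, t2). \<exists>s. t1 \<in> pa E s \<and> t2 \<in> pa E s \<and> t1 \<noteq> t2}"

definition state_spaces :: "('n \<Rightarrow> (nat \<Rightarrow> real) measure) \<Rightarrow> bool" where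
  "state_spaces M \<longleftrightarrow> (\<forall>s.
     (\<exists>A. finite A \<and> card A \<ge> 2 \<and> M s = count_space A) \<or>
     (\<exists>d. d \<ge> 1 \<and> M s = PiM {..<d} (\<lambda>_. lborel)))"

definition dag_model ::
  "('n::finite \<Rightarrow> (nat \<Rightarrow> real) measure) \<Rightarrow> ('n \<times> 'n) set \<Rightarrow> ('n \<Rightarrow> (nat \<Rightarrow> real)) measure set" where
  "dag_model M E = {P. prob_space P \<and>
     (\<exists>k :: 'n \<Rightarrow> ('n \<Rightarrow> (nat \<Rightarrow> real)) \<Rightarrow> (nat \<Rightarrow> real) \<Rightarrow> real.
        (\<forall>s. (\<lambda>(y, z). k s y z) \<in> borel_measurable (PiM (pa E s) M \<Otimes>\<^sub>M M s)
           \<and> (\<forall>y \<in> space (PiM (pa E s) M). \<forall>z \<in> space (M s). 0 \<le> k s y z)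
           \<and> (\<forall>y \<in> space (PiM (pa E s) M). (\<integral>\<^sup>+ z. ennreal (k s y z) \<partial>M s) = 1))
      \<and> P = density (PiM UNIV M)
              (\<lambda>x. \<Prod>s\<in>UNIV. ennreal (k s (restrict x (pa E s)) (x s))))}"

end

theory Submission
  imports Defs
begin

text \<open>Suppose t1 and t2 are distinct parents of s in G but not adjacent in G'.  Let x t1 and
  x t2 be independent fair bits, x s their exclusive or, and all other coordinates the bit 0;
  this law factorizes along G, hence along G'.  Let A be the G'-ancestral set of {t1, t2}; it
  contains s because G' contains the reversed edges of G.  The marginal on A factorizes along G',
  and as G' is acyclic and t1, t2 are not adjacent, no G'-family in A contains both t1 and t2.
  So the density on A splits into a factor free of x t2 and one free of x t1: the two bits are
  conditionally independent given the rest of A.  But given that the rest of A is 0 (in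
  particular x s = 0) the two bits are equal, each value having probability 1/2, which is not a
  product law.\<close>

section \<open>Densities factorizing along a DAG\<close>

definition kernels ::
  "('n \<Rightarrow> 'a measure) \<Rightarrow> ('n \<times> 'n) set \<Rightarrow> ('n \<Rightarrow> ('n \<Rightarrow> 'a) \<Rightarrow> 'a \<Rightarrow> real) \<Rightarrow> bool" where
  "kernels M E k \<longleftrightarrow> (\<forall>s. (\<lambda>(y, z). k s y z) \<in> borel_measurable (PiM (pa E s) M \<Otimes>\<^sub>M M s)
     \<and> (\<forall>y \<in> space (PiM (pa E s) M). \<forall>z \<in> space (M s). 0 \<le> k s y z)
     \<and> (\<forall>y \<in> space (PiM (pa E s) M). (\<integral>\<^sup>+ z. ennreal (k s y z) \<partial>M s) = 1))"

definition kernel_factor ::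
  "('n \<times> 'n) set \<Rightarrow> ('n \<Rightarrow> ('n \<Rightarrow> 'a) \<Rightarrow> 'a \<Rightarrow> real) \<Rightarrow> 'n \<Rightarrow> ('n \<Rightarrow> 'a) \<Rightarrow> ennreal" where
  "kernel_factor E k v x = ennreal (k v (restrict x (pa E v)) (x v))"

lemma dag_model_iff:
  "P \<in> dag_model M E \<longleftrightarrow> prob_space P \<and>
     (\<exists>k. kernels M E k \<and> P = density (PiM UNIV M) (\<lambda>x. \<Prod>v\<in>UNIV. kernel_factor E k v x))"
  unfolding dag_model_def kernels_def kernel_factor_def by blast

lemma not_in_pa_self: "acyclic E \<Longrightarrow> v \<notin> pa E v"
  unfolding pa_def acyclic_def by (auto dest: r_into_trancl')

lemma measurable_kernel_factor:
  assumes "kernels M E k" "pa E v \<subseteq> I" "v \<in> I"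
  shows "kernel_factor E k v \<in> borel_measurable (PiM I M)"
proof -
  have "(\<lambda>(y, z). k v y z) \<in> borel_measurable (PiM (pa E v) M \<Otimes>\<^sub>M M v)"
    using assms(1) unfolding kernels_def by blast
  moreover have "(\<lambda>x. (restrict x (pa E v), x v)) \<in> measurable (PiM I M) (PiM (pa E v) M \<Otimes>\<^sub>M M v)"
    using assms(2,3) by (intro measurable_Pair measurable_restrict_subset measurable_component_singleton)
  ultimately show ?thesis
    unfolding kernel_factor_def by (auto dest: measurable_comp simp: comp_def)
qed

lemma kernel_factor_cong:
  assumes "\<And>i. i \<in> insert v (pa E v) \<Longrightarrow> x i = x' i"
  shows "kernel_factor E k v x = kernel_factor E k v x'"
proof -
  have "restrict x (pa E v) = restrict x' (pa E v)" using assms by (auto simp: restrict_def)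
  then show ?thesis using assms unfolding kernel_factor_def by simp
qed

lemma nn_integral_kernel_factor_fun_upd:
  assumes "kernels M E k" "v \<notin> pa E v" "pa E v \<subseteq> I" "x \<in> space (PiM I M)"
  shows "(\<integral>\<^sup>+ z. kernel_factor E k v (x(v := z)) \<partial>M v) = 1"
proof -
  have "restrict x (pa E v) \<in> space (PiM (pa E v) M)"
    using measurable_space[OF measurable_restrict_subset[OF assms(3)] assms(4)] .
  then show ?thesis
    using assms(1,2) unfolding kernels_def kernel_factor_def by simp
qed

lemma measurable_override_on:
  assumes "x \<in> space (PiM UNIV M)"
  shows "(\<lambda>y. override_on x y D) \<in> measurable (PiM D M) (PiM UNIV M)"
proof -
  have "(\<lambda>y. \<lambda>i\<in>UNIV. if i \<in> D then y i else x i) \<in> measurable (PiM D M) (PiM UNIV M)"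
  proof (rule measurable_restrict)
    fix i show "(\<lambda>y. if i \<in> D then y i else x i) \<in> measurable (PiM D M) (M i)"
      using assms by (cases "i \<in> D") (auto simp: space_PiM PiE_iff)
  qed
  then show ?thesis unfolding override_on_def restrict_def by simp
qed

lemma acyclic_obtain_sink:
  fixes E :: "('n::finite \<times> 'n) set"
  assumes "acyclic E" "D \<noteq> {}"
  obtains w where "w \<in> D" "\<And>v. v \<in> D \<Longrightarrow> w \<notin> pa E v"
proof -
  have "wf (E\<inverse>)" using finite_acyclic_wf_converse[OF finite assms(1)] .
  then obtain w where "w \<in> D" "\<And>u. (u, w) \<in> E\<inverse> \<Longrightarrow> u \<notin> D"
    using wfE_min[of "E\<inverse>" _ D] assms(2) by blast
  then show ?thesis using that unfolding pa_def by blast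
qed

lemma nn_integral_kernel_factor_childless:
  fixes E :: "('n::finite \<times> 'n) set"
  assumes k: "kernels M E k" and acyclic: "acyclic E" and x: "x \<in> space (PiM UNIV M)"
    and childless: "\<And>v. v \<in> D \<Longrightarrow> w \<notin> pa E v" and w: "w \<notin> D"
  shows "(\<integral>\<^sup>+ z. (\<Prod>v\<in>insert w D. kernel_factor E k v (x(w := z))) \<partial>M w) = (\<Prod>v\<in>D. kernel_factor E k v x)"
proof -
  have "kernel_factor E k v (x(w := z)) = kernel_factor E k v x" if "v \<in> D" for v z
    using that w childless by (intro kernel_factor_cong) auto
  then have "(\<Prod>v\<in>insert w D. kernel_factor E k v (x(w := z)))
      = kernel_factor E k w (x(w := z)) * (\<Prod>v\<in>D. kernel_factor E k v x)" for z
    using w by simp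
  moreover have "(\<lambda>z. kernel_factor E k w (x(w := z))) \<in> borel_measurable (M w)"
    using measurable_fun_upd[of UNIV UNIV w "\<lambda>_. x" "M w" M "\<lambda>z. z"] x
    by (intro measurable_compose[OF _ measurable_kernel_factor[OF k]]) auto
  ultimately show ?thesis
    using nn_integral_kernel_factor_fun_upd[OF k not_in_pa_self[OF acyclic] _ x] by (simp add: nn_integral_multc)
qed

text \<open>Induction on D: a node of D without children in D is integrated out first, since no
  other factor depends on it and its own kernel integrates to 1.\<close>
lemma nn_integral_prod_kernel_factor_eq_1:
  fixes E :: "('n::finite \<times> 'n) set"
  assumes sf: "\<And>v. sigma_finite_measure (M v)" and k: "kernels M E k" and acyclic: "acyclic E"
    and x: "x \<in> space (PiM UNIV M)"
  shows "(\<integral>\<^sup>+ y. (\<Prod>v\<in>D. kernel_factor E k v (override_on x y D)) \<partial>PiM D M) = 1"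
using x proof (induction "card D" arbitrary: D x rule: less_induct)
  case less
  interpret product_sigma_finite M by (simp add: product_sigma_finite_def sf)
  show ?case
  proof (cases "D = {}")
    case True
    then show ?thesis by (simp add: space_PiM_empty)
  next
    case False
    then obtain w where w: "w \<in> D" and childless: "\<And>v. v \<in> D \<Longrightarrow> w \<notin> pa E v"
      using acyclic_obtain_sink[OF acyclic] by blast
    define D' where "D' = D - {w}"
    have D: "D = insert w D'" "w \<notin> D'" using w by (auto simp: D'_def)
    have card: "card D' < card D" unfolding D'_def using finite w by (rule card_Diff1_less)
    let ?f = "\<lambda>y. \<Prod>v\<in>D. kernel_factor E k v (override_on x y D)"
    have "(\<lambda>y. kernel_factor E k v (override_on x y D)) \<in> borel_measurable (PiM D M)" for v
      by (rule measurable_compose[OF measurable_override_on[OF less.prems] measurable_kernel_factor[OF k]]) auto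
    then have "?f \<in> borel_measurable (PiM (insert w D') M)"
      unfolding D(1)[symmetric] by (rule borel_measurable_prod_ennreal)
    then have "(\<integral>\<^sup>+ y. ?f y \<partial>PiM D M) = (\<integral>\<^sup>+ y. (\<integral>\<^sup>+ z. ?f (y(w := z)) \<partial>M w) \<partial>PiM D' M)"
      unfolding D(1) by (rule product_nn_integral_insert[OF finite D(2)])
    also have "\<dots> = (\<integral>\<^sup>+ y. (\<Prod>v\<in>D'. kernel_factor E k v (override_on x y D')) \<partial>PiM D' M)"
    proof (rule nn_integral_cong)
      fix y assume y: "y \<in> space (PiM D' M)"
      have "override_on x (y(w := z)) D = (override_on x y D')(w := z)" for z
        unfolding override_on_def D(1) by auto
      moreover have "w \<notin> pa E v" if "v \<in> D'" for v using that childless D by blast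
      ultimately show "(\<integral>\<^sup>+ z. ?f (y(w := z)) \<partial>M w) = (\<Prod>v\<in>D'. kernel_factor E k v (override_on x y D'))"
        using nn_integral_kernel_factor_childless[OF k acyclic
            measurable_space[OF measurable_override_on[OF less.prems] y] _ D(2)]
        unfolding D(1) by simp
    qed
    also have "\<dots> = 1" using less.hyps[OF card] less.prems .
    finally show ?thesis .
  qed
qed

lemma density_prod_kernel_factor_in_dag_model:
  fixes E :: "('n::finite \<times> 'n) set"
  assumes sf: "\<And>v. sigma_finite_measure (M v)" and k: "kernels M E k" and acyclic: "acyclic E"
    and ne: "space (PiM UNIV M) \<noteq> {}"
  shows "density (PiM UNIV M) (\<lambda>x. \<Prod>v\<in>UNIV. kernel_factor E k v x) \<in> dag_model M E"
proof -
  obtain x where x: "x \<in> space (PiM UNIV M)" using ne by blast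
  let ?F = "\<lambda>x. \<Prod>v\<in>UNIV. kernel_factor E k v x"
  have "?F \<in> borel_measurable (PiM UNIV M)"
    by (intro borel_measurable_prod_ennreal measurable_kernel_factor[OF k]) auto
  then have "emeasure (density (PiM UNIV M) ?F) (space (PiM UNIV M)) = (\<integral>\<^sup>+ x. ?F x \<partial>PiM UNIV M)"
    by (simp add: emeasure_density cong: nn_integral_cong)
  also have "\<dots> = 1"
    using nn_integral_prod_kernel_factor_eq_1[OF sf k acyclic x, of UNIV] by (simp add: override_on_def)
  finally have "prob_space (density (PiM UNIV M) ?F)"
    by (intro prob_spaceI) simp
  then show ?thesis unfolding dag_model_iff by (intro conjI exI[of _ k]) (use k in auto)
qed

lemma nn_integral_prod_kernel_factor_restrict:
  fixes E :: "('n::finite \<times> 'n) set"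
  assumes sf: "\<And>v. sigma_finite_measure (M v)" and k: "kernels M E k" and acyclic: "acyclic E"
    and ancestral: "\<And>v. v \<in> A \<Longrightarrow> pa E v \<subseteq> A"
    and g: "g \<in> borel_measurable (PiM A M)"
    and ne: "space (PiM UNIV M) \<noteq> {}"
  shows "(\<integral>\<^sup>+ x. (\<Prod>v\<in>UNIV. kernel_factor E k v x) * g (restrict x A) \<partial>PiM UNIV M)
       = (\<integral>\<^sup>+ u. (\<Prod>v\<in>A. kernel_factor E k v u) * g u \<partial>PiM A M)"
proof -
  interpret product_sigma_finite M by (simp add: product_sigma_finite_def sf)
  have A: "A \<union> - A = UNIV" "A \<inter> - A = {}" by auto
  obtain x0 where x0: "x0 \<in> space (PiM UNIV M)" using ne by blast
  have y0: "restrict x0 (- A) \<in> space (PiM (- A) M)"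
    using measurable_space[OF measurable_restrict_subset x0] by auto
  let ?h = "\<lambda>x. (\<Prod>v\<in>UNIV. kernel_factor E k v x) * g (restrict x A)"
  have "?h \<in> borel_measurable (PiM (A \<union> - A) M)"
    unfolding A
    by (intro borel_measurable_times_ennreal borel_measurable_prod_ennreal measurable_kernel_factor[OF k]
          measurable_compose[OF measurable_restrict_subset g]) auto
  then have "(\<integral>\<^sup>+ x. ?h x \<partial>PiM UNIV M) = (\<integral>\<^sup>+ u. (\<integral>\<^sup>+ y. ?h (merge A (- A) (u, y)) \<partial>PiM (- A) M) \<partial>PiM A M)"
    unfolding A(1)[symmetric] by (rule product_nn_integral_fold[OF A(2) finite finite])
  also have "\<dots> = (\<integral>\<^sup>+ u. (\<Prod>v\<in>A. kernel_factor E k v u) * g u \<partial>PiM A M)"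
  proof (rule nn_integral_cong)
    fix u assume u: "u \<in> space (PiM A M)"
    define x where "x = merge A (- A) (u, restrict x0 (- A))"
    have x: "x \<in> space (PiM UNIV M)"
      using measurable_space[OF measurable_merge, of "(u, restrict x0 (- A))" A M "- A"] u y0
      unfolding x_def by (simp add: space_pair_measure A)
    have merge: "merge A (- A) (u, y) = override_on x y (- A)" for y
      unfolding x_def override_on_def merge_def by auto
    have restrict: "restrict (merge A (- A) (u, y)) A = u" for y
      using u by (simp add: space_PiM PiE_def extensional_restrict)
    have "kernel_factor E k v (merge A (- A) (u, y)) = kernel_factor E k v u" if "v \<in> A" for v y
      by (rule kernel_factor_cong) (use that ancestral in \<open>auto simp: merge_def\<close>)
    then have "?h (merge A (- A) (u, y)) =
        ((\<Prod>v\<in>A. kernel_factor E k v u) * g u) * (\<Prod>v\<in>- A. kernel_factor E k v (override_on x y (- A)))" for y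
      using prod.union_disjoint[OF finite finite A(2), of "\<lambda>v. kernel_factor E k v (merge A (- A) (u, y))"]
      unfolding restrict by (simp add: A(1) merge mult_ac)
    moreover have "(\<lambda>y. \<Prod>v\<in>- A. kernel_factor E k v (override_on x y (- A))) \<in> borel_measurable (PiM (- A) M)"
      by (intro borel_measurable_prod_ennreal measurable_compose[OF measurable_override_on[OF x]]
          measurable_kernel_factor[OF k]) auto
    ultimately show "(\<integral>\<^sup>+ y. ?h (merge A (- A) (u, y)) \<partial>PiM (- A) M) = (\<Prod>v\<in>A. kernel_factor E k v u) * g u"
      using nn_integral_prod_kernel_factor_eq_1[OF sf k acyclic x] by (simp add: nn_integral_cmult)
  qed
  finally show ?thesis .
qed

lemma (in product_sigma_finite) product_nn_integral_insert2:
  assumes "finite I" "i \<notin> I" "j \<notin> I" "i \<noteq> j"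
    and f: "f \<in> borel_measurable (PiM (insert i (insert j I)) M)"
  shows "integral\<^sup>N (PiM (insert i (insert j I)) M) f =
    (\<integral>\<^sup>+ x. (\<integral>\<^sup>+ y. (\<integral>\<^sup>+ z. f (x(j := y, i := z)) \<partial>M i) \<partial>M j) \<partial>PiM I M)"
proof -
  have "(\<lambda>(x, z). f (x(i := z))) \<in> borel_measurable (PiM (insert j I) M \<Otimes>\<^sub>M M i)"
    using assms by measurable
  from sigma_finite_measure.borel_measurable_nn_integral_fst[OF sigma_finite_measures this]
  have "(\<lambda>x. \<integral>\<^sup>+ z. f (x(i := z)) \<partial>M i) \<in> borel_measurable (PiM (insert j I) M)"
    by simp
  then show ?thesis
    using assms by (simp add: product_nn_integral_insert)
qed

lemma nn_integral_prod_kernel_factor_pair: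
  fixes E :: "('n::finite \<times> 'n) set"
  assumes sf: "\<And>v. sigma_finite_measure (M v)" and k: "kernels M E k" and acyclic: "acyclic E"
    and ancestral: "\<And>v. v \<in> insert t1 (insert t2 Z) \<Longrightarrow> pa E v \<subseteq> insert t1 (insert t2 Z)"
    and t: "t1 \<notin> Z" "t2 \<notin> Z" "t1 \<noteq> t2"
    and ne: "space (PiM UNIV M) \<noteq> {}"
    and [measurable]: "h \<in> borel_measurable (PiM Z M)" "f1 \<in> borel_measurable (M t1)" "f2 \<in> borel_measurable (M t2)"
  shows "(\<integral>\<^sup>+ x. (\<Prod>v\<in>UNIV. kernel_factor E k v x) * (h (restrict x Z) * f1 (x t1) * f2 (x t2)) \<partial>PiM UNIV M)
    = (\<integral>\<^sup>+ z. (\<integral>\<^sup>+ x2. (\<integral>\<^sup>+ x1. (\<Prod>v\<in>insert t1 (insert t2 Z). kernel_factor E k v (z(t2 := x2, t1 := x1)))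
          * (h z * f1 x1 * f2 x2) \<partial>M t1) \<partial>M t2) \<partial>PiM Z M)"
proof -
  interpret product_sigma_finite M by (simp add: product_sigma_finite_def sf)
  let ?A = "insert t1 (insert t2 Z)"
  define g where "g u = h (restrict u Z) * f1 (u t1) * f2 (u t2)" for u :: "'n \<Rightarrow> 'a"
  have g: "g \<in> borel_measurable (PiM I M)" if "Z \<subseteq> I" "t1 \<in> I" "t2 \<in> I" for I
  proof -
    have [measurable]: "(\<lambda>u. restrict u Z) \<in> measurable (PiM I M) (PiM Z M)"
      using that(1) by (rule measurable_restrict_subset)
    show ?thesis unfolding g_def using that by measurable
  qed
  have "restrict (restrict x ?A) Z = restrict x Z" for x :: "'n \<Rightarrow> 'a" by auto
  then have "(\<integral>\<^sup>+ x. (\<Prod>v\<in>UNIV. kernel_factor E k v x) * g x \<partial>PiM UNIV M)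
      = (\<integral>\<^sup>+ x. (\<Prod>v\<in>UNIV. kernel_factor E k v x) * g (restrict x ?A) \<partial>PiM UNIV M)"
    by (simp add: g_def)
  also have "\<dots> = (\<integral>\<^sup>+ u. (\<Prod>v\<in>?A. kernel_factor E k v u) * g u \<partial>PiM ?A M)"
    by (rule nn_integral_prod_kernel_factor_restrict[OF sf k acyclic ancestral g ne]) auto
  also have "\<dots> = (\<integral>\<^sup>+ z. (\<integral>\<^sup>+ x2. (\<integral>\<^sup>+ x1. (\<Prod>v\<in>?A. kernel_factor E k v (z(t2 := x2, t1 := x1)))
          * g (z(t2 := x2, t1 := x1)) \<partial>M t1) \<partial>M t2) \<partial>PiM Z M)"
    by (rule product_nn_integral_insert2[OF finite t])
      (intro borel_measurable_times_ennreal borel_measurable_prod_ennreal measurable_kernel_factor[OF k] g,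
       use ancestral in auto)
  also have "\<dots> = (\<integral>\<^sup>+ z. (\<integral>\<^sup>+ x2. (\<integral>\<^sup>+ x1. (\<Prod>v\<in>?A. kernel_factor E k v (z(t2 := x2, t1 := x1)))
          * (h z * f1 x1 * f2 x2) \<partial>M t1) \<partial>M t2) \<partial>PiM Z M)"
  proof (intro nn_integral_cong)
    fix z x1 x2 assume "z \<in> space (PiM Z M)"
    then have "restrict (z(t2 := x2, t1 := x1)) Z = z"
      using t by (auto simp: space_PiM PiE_def extensional_def restrict_def fun_eq_iff)
    then show "(\<Prod>v\<in>?A. kernel_factor E k v (z(t2 := x2, t1 := x1))) * g (z(t2 := x2, t1 := x1))
      = (\<Prod>v\<in>?A. kernel_factor E k v (z(t2 := x2, t1 := x1))) * (h z * f1 x1 * f2 x2)"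
      using t by (simp add: g_def)
  qed
  finally show ?thesis by (simp only: g_def)
qed

section \<open>Conditional independence of non-adjacent nodes\<close>

definition ancestors :: "('n \<times> 'n) set \<Rightarrow> 'n set \<Rightarrow> 'n set" where
  "ancestors E T = {v. \<exists>t\<in>T. (v, t) \<in> E\<^sup>*}"

lemma ancestors_mono: "T \<subseteq> ancestors E T"
  unfolding ancestors_def by auto

lemma pa_subset_ancestors: "v \<in> ancestors E T \<Longrightarrow> pa E v \<subseteq> ancestors E T"
  unfolding ancestors_def pa_def by (auto intro: converse_rtrancl_into_rtrancl)

lemma family_separated_in_ancestors:
  assumes "acyclic E" "t1 \<noteq> t2" "(t1, t2) \<notin> E" "(t2, t1) \<notin> E" "v \<in> ancestors E {t1, t2}"
  shows "t1 \<notin> insert v (pa E v) \<or> t2 \<notin> insert v (pa E v)"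
proof (rule ccontr)
  assume "\<not> ?thesis"
  then have "(t1, v) \<in> E" "(t2, v) \<in> E" "v \<noteq> t1" "v \<noteq> t2"
    using assms(2-4) by (auto simp: pa_def)
  then have "(t1, t1) \<in> E\<^sup>+ \<or> (t2, t2) \<in> E\<^sup>+"
    using assms(5) unfolding ancestors_def by (auto intro: rtrancl_into_trancl2)
  then show False using assms(1) unfolding acyclic_def by blast
qed

lemma prod_kernel_factor_split:
  fixes E :: "('n::finite \<times> 'n) set"
  assumes k: "kernels M E k"
    and ancestral: "\<And>v. v \<in> insert t1 (insert t2 Z) \<Longrightarrow> pa E v \<subseteq> insert t1 (insert t2 Z)"
    and separated: "\<And>v. v \<in> insert t1 (insert t2 Z) \<Longrightarrow> t1 \<notin> insert v (pa E v) \<or> t2 \<notin> insert v (pa E v)"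
    and t: "t1 \<notin> Z" "t2 \<notin> Z" "t1 \<noteq> t2"
  obtains \<phi> \<psi> where "\<phi> \<in> borel_measurable (PiM (insert t1 Z) M)" "\<psi> \<in> borel_measurable (PiM (insert t2 Z) M)"
    and "\<And>z x1 x2. (\<Prod>v\<in>insert t1 (insert t2 Z). kernel_factor E k v (z(t2 := x2, t1 := x1)))
      = \<phi> (z(t1 := x1)) * \<psi> (z(t2 := x2))"
proof
  let ?A = "insert t1 (insert t2 Z)"
  define A1 where "A1 = {v \<in> ?A. t2 \<notin> insert v (pa E v)}"
  define A2 where "A2 = ?A - A1"
  have A: "?A = A1 \<union> A2" "A1 \<inter> A2 = {}" by (auto simp: A1_def A2_def)
  have family1: "insert v (pa E v) \<subseteq> insert t1 Z" if "v \<in> A1" for v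
    using that ancestral unfolding A1_def by blast
  have family2: "insert v (pa E v) \<subseteq> insert t2 Z" if "v \<in> A2" for v
    using that ancestral separated unfolding A1_def A2_def by blast
  show "(\<lambda>x. \<Prod>v\<in>A1. kernel_factor E k v x) \<in> borel_measurable (PiM (insert t1 Z) M)"
    by (intro borel_measurable_prod_ennreal measurable_kernel_factor[OF k]) (use family1 in auto)
  show "(\<lambda>x. \<Prod>v\<in>A2. kernel_factor E k v x) \<in> borel_measurable (PiM (insert t2 Z) M)"
    by (intro borel_measurable_prod_ennreal measurable_kernel_factor[OF k]) (use family2 in auto)
  fix z x1 x2
  have "(\<Prod>v\<in>A1. kernel_factor E k v (z(t2 := x2, t1 := x1))) = (\<Prod>v\<in>A1. kernel_factor E k v (z(t1 := x1)))"
    using family1 t by (intro prod.cong kernel_factor_cong) auto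
  moreover have "(\<Prod>v\<in>A2. kernel_factor E k v (z(t2 := x2, t1 := x1))) = (\<Prod>v\<in>A2. kernel_factor E k v (z(t2 := x2)))"
    using family2 t by (intro prod.cong kernel_factor_cong) auto
  ultimately show "(\<Prod>v\<in>?A. kernel_factor E k v (z(t2 := x2, t1 := x1)))
      = (\<Prod>v\<in>A1. kernel_factor E k v (z(t1 := x1))) * (\<Prod>v\<in>A2. kernel_factor E k v (z(t2 := x2)))"
    unfolding A(1) by (simp add: prod.union_disjoint[OF _ _ A(2)])
qed

lemma nn_integral_fun_upd_product:
  assumes z: "z \<in> space (PiM Z M)" and t: "t1 \<notin> Z" "t2 \<notin> Z"
    and [measurable]: "\<phi> \<in> borel_measurable (PiM (insert t1 Z) M)" "\<psi> \<in> borel_measurable (PiM (insert t2 Z) M)"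
      "f1 \<in> borel_measurable (M t1)" "f2 \<in> borel_measurable (M t2)"
  shows "(\<integral>\<^sup>+ x2. (\<integral>\<^sup>+ x1. \<phi> (z(t1 := x1)) * \<psi> (z(t2 := x2)) * (c * f1 x1 * f2 x2) \<partial>M t1) \<partial>M t2)
    = c * (\<integral>\<^sup>+ x1. f1 x1 * \<phi> (z(t1 := x1)) \<partial>M t1) * (\<integral>\<^sup>+ x2. f2 x2 * \<psi> (z(t2 := x2)) \<partial>M t2)"
proof -
  have [measurable]: "(\<lambda>x. z(t1 := x)) \<in> measurable (M t1) (PiM (insert t1 Z) M)"
    "(\<lambda>x. z(t2 := x)) \<in> measurable (M t2) (PiM (insert t2 Z) M)"
    using z t by (auto intro: measurable_component_update)
  have "\<phi> (z(t1 := x1)) * \<psi> (z(t2 := x2)) * (c * f1 x1 * f2 x2)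
    = (f1 x1 * \<phi> (z(t1 := x1))) * (c * (f2 x2 * \<psi> (z(t2 := x2))))" for x1 x2
    by (simp only: ac_simps)
  then have "(\<integral>\<^sup>+ x2. (\<integral>\<^sup>+ x1. \<phi> (z(t1 := x1)) * \<psi> (z(t2 := x2)) * (c * f1 x1 * f2 x2) \<partial>M t1) \<partial>M t2)
    = (\<integral>\<^sup>+ x2. (\<integral>\<^sup>+ x1. f1 x1 * \<phi> (z(t1 := x1)) \<partial>M t1) * (c * (f2 x2 * \<psi> (z(t2 := x2)))) \<partial>M t2)"
    by (simp add: nn_integral_multc)
  also have "\<dots> = (\<integral>\<^sup>+ x1. f1 x1 * \<phi> (z(t1 := x1)) \<partial>M t1) * (c * (\<integral>\<^sup>+ x2. f2 x2 * \<psi> (z(t2 := x2)) \<partial>M t2))"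
    by (simp add: nn_integral_cmult)
  finally show ?thesis by (simp only: ac_simps)
qed

text \<open>If t1 and t2 are not adjacent, then x t1 and x t2 are conditionally independent given the
  other ancestors of t1 and t2.\<close>
lemma dag_model_cond_indep:
  fixes E :: "('n::finite \<times> 'n) set" and M :: "'n \<Rightarrow> (nat \<Rightarrow> real) measure"
  assumes sf: "\<And>v. sigma_finite_measure (M v)" and P: "P \<in> dag_model M E" and acyclic: "acyclic E"
    and t: "t1 \<noteq> t2" "(t1, t2) \<notin> E" "(t2, t1) \<notin> E"
    and ne: "space (PiM UNIV M) \<noteq> {}"
  defines "Z \<equiv> ancestors E {t1, t2} - {t1, t2}"
  obtains \<phi> \<psi> where "\<phi> \<in> borel_measurable (PiM (insert t1 Z) M)" "\<psi> \<in> borel_measurable (PiM (insert t2 Z) M)"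
    and "\<And>(h :: ('n \<Rightarrow> nat \<Rightarrow> real) \<Rightarrow> ennreal) f1 f2. h \<in> borel_measurable (PiM Z M) \<Longrightarrow>
      f1 \<in> borel_measurable (M t1) \<Longrightarrow> f2 \<in> borel_measurable (M t2) \<Longrightarrow>
      (\<integral>\<^sup>+ x. h (restrict x Z) * f1 (x t1) * f2 (x t2) \<partial>P)
      = (\<integral>\<^sup>+ z. h z * (\<integral>\<^sup>+ x1. f1 x1 * \<phi> (z(t1 := x1)) \<partial>M t1) * (\<integral>\<^sup>+ x2. f2 x2 * \<psi> (z(t2 := x2)) \<partial>M t2) \<partial>PiM Z M)"
proof -
  obtain k where k: "kernels M E k" and P: "P = density (PiM UNIV M) (\<lambda>x. \<Prod>v\<in>UNIV. kernel_factor E k v x)"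
    using P unfolding dag_model_iff by blast
  let ?A = "insert t1 (insert t2 Z)"
  have A: "?A = ancestors E {t1, t2}"
    using ancestors_mono[of "{t1, t2}" E] by (auto simp: Z_def)
  have ancestral: "pa E v \<subseteq> ?A" if "v \<in> ?A" for v
    unfolding A using that[unfolded A] by (rule pa_subset_ancestors)
  have separated: "t1 \<notin> insert v (pa E v) \<or> t2 \<notin> insert v (pa E v)" if "v \<in> ?A" for v
    using family_separated_in_ancestors[OF acyclic t that[unfolded A]] .
  have Z: "t1 \<notin> Z" "t2 \<notin> Z" "t1 \<noteq> t2" using t(1) by (auto simp: Z_def)
  obtain \<phi> \<psi> where \<phi>\<psi> [measurable]: "\<phi> \<in> borel_measurable (PiM (insert t1 Z) M)"
      "\<psi> \<in> borel_measurable (PiM (insert t2 Z) M)"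
    and split: "\<And>z x1 x2. (\<Prod>v\<in>?A. kernel_factor E k v (z(t2 := x2, t1 := x1))) = \<phi> (z(t1 := x1)) * \<psi> (z(t2 := x2))"
    using prod_kernel_factor_split[OF k ancestral separated Z] by blast
  show ?thesis
  proof (rule that[OF \<phi>\<psi>])
    fix h :: "('n \<Rightarrow> nat \<Rightarrow> real) \<Rightarrow> ennreal" and f1 f2 :: "(nat \<Rightarrow> real) \<Rightarrow> ennreal"
    assume [measurable]: "h \<in> borel_measurable (PiM Z M)" "f1 \<in> borel_measurable (M t1)" "f2 \<in> borel_measurable (M t2)"
    have [measurable]: "(\<lambda>x. restrict x Z) \<in> measurable (PiM UNIV M) (PiM Z M)"
      by (rule measurable_restrict_subset) simp
    have [measurable]: "(\<lambda>x. \<Prod>v\<in>UNIV. kernel_factor E k v x) \<in> borel_measurable (PiM UNIV M)"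
      by (intro borel_measurable_prod_ennreal measurable_kernel_factor[OF k]) auto
    have "(\<integral>\<^sup>+ x. h (restrict x Z) * f1 (x t1) * f2 (x t2) \<partial>P)
      = (\<integral>\<^sup>+ x. (\<Prod>v\<in>UNIV. kernel_factor E k v x) * (h (restrict x Z) * f1 (x t1) * f2 (x t2)) \<partial>PiM UNIV M)"
      unfolding P by (rule nn_integral_density) measurable
    also have "\<dots> = (\<integral>\<^sup>+ z. (\<integral>\<^sup>+ x2. (\<integral>\<^sup>+ x1. \<phi> (z(t1 := x1)) * \<psi> (z(t2 := x2))
        * (h z * f1 x1 * f2 x2) \<partial>M t1) \<partial>M t2) \<partial>PiM Z M)"
      unfolding split[symmetric] by (rule nn_integral_prod_kernel_factor_pair[OF sf k acyclic ancestral Z ne]) measurable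
    also have "\<dots> = (\<integral>\<^sup>+ z. h z * (\<integral>\<^sup>+ x1. f1 x1 * \<phi> (z(t1 := x1)) \<partial>M t1)
        * (\<integral>\<^sup>+ x2. f2 x2 * \<psi> (z(t2 := x2)) \<partial>M t2) \<partial>PiM Z M)"
      using Z by (intro nn_integral_cong nn_integral_fun_upd_product) measurable
    finally show "(\<integral>\<^sup>+ x. h (restrict x Z) * f1 (x t1) * f2 (x t2) \<partial>P)
      = (\<integral>\<^sup>+ z. h z * (\<integral>\<^sup>+ x1. f1 x1 * \<phi> (z(t1 := x1)) \<partial>M t1) * (\<integral>\<^sup>+ x2. f2 x2 * \<psi> (z(t2 := x2)) \<partial>M t2) \<partial>PiM Z M)" .
  qed
qed

section \<open>The exclusive-or law\<close>

lemma count_space_two_unit_sets: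
  assumes "finite A" "card A \<ge> 2"
  shows "\<exists>B. (\<forall>b. B b \<in> sets (count_space A) \<and> emeasure (count_space A) (B b) = 1) \<and> B False \<inter> B True = {}"
proof -
  obtain a b where "a \<in> A" "b \<in> A" "a \<noteq> b"
    using assms(2) by (metis card_le_Suc_iff numeral_2_eq_2 insertCI)
  then show ?thesis
    by (intro exI[of _ "\<lambda>i. if i then {b} else {a}"]) (auto simp: emeasure_count_space_finite)
qed

lemma lborel_PiM_two_unit_sets:
  fixes d :: nat
  assumes "d \<ge> 1"
  defines "L \<equiv> PiM {..<d} (\<lambda>_. lborel :: real measure)"
  shows "\<exists>B. (\<forall>b. B b \<in> sets L \<and> emeasure L (B b) = 1) \<and> B False \<inter> B True = {}"
proof -
  interpret F: finite_product_sigma_finite "\<lambda>_. lborel :: real measure" "{..<d}"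
    by unfold_locales (auto intro: lborel.sigma_finite_measure_axioms)
  define B0 where "B0 = PiE {..<d} (\<lambda>_. {0..1::real})"
  define B1 where "B1 = PiE {..<d} (\<lambda>i. if i = 0 then {2..3::real} else {0..1})"
  have "0 \<in> {..<d}" using assms by auto
  have "B0 \<inter> B1 = {}"
  proof (intro equals0I)
    fix x assume x: "x \<in> B0 \<inter> B1"
    then have "x 0 \<in> {0..1}"
      using \<open>0 \<in> {..<d}\<close> unfolding B0_def by (auto simp: PiE_iff)
    moreover from x have "x 0 \<in> (if (0::nat) = 0 then {2..3} else {0..1})"
      using \<open>0 \<in> {..<d}\<close> unfolding B1_def PiE_iff by blast
    ultimately show False by simp
  qed
  moreover have "B0 \<in> sets L" "B1 \<in> sets L"
    unfolding B0_def B1_def L_def by (intro sets_PiM_I_finite; auto)+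
  moreover have "emeasure L B0 = 1" "emeasure L B1 = 1"
    unfolding B0_def B1_def L_def by (subst F.measure_times; auto intro!: prod.neutral)+
  ultimately show ?thesis
    by (intro exI[of _ "\<lambda>b. if b then B1 else B0"]) auto
qed

locale bit_state_spaces =
  fixes M :: "'n::finite \<Rightarrow> 'a measure" and B :: "bool \<Rightarrow> 'n \<Rightarrow> 'a set"
  assumes sigma_finite: "sigma_finite_measure (M v)"
    and sets_B [measurable]: "B b v \<in> sets (M v)"
    and emeasure_B: "emeasure (M v) (B b v) = 1"
    and disjoint_B: "B False v \<inter> B True v = {}"

lemma state_spaces_bit_state_spaces:
  assumes "state_spaces M"
  obtains B where "bit_state_spaces M B"
proof -
  have "\<exists>Bv. sigma_finite_measure (M v) \<and> (\<forall>b. Bv b \<in> sets (M v) \<and> emeasure (M v) (Bv b) = 1)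
    \<and> Bv False \<inter> Bv True = {}" for v
    using assms[unfolded state_spaces_def, rule_format, of v]
  proof (elim disjE exE conjE)
    fix A assume "finite A" "2 \<le> card A" "M v = count_space A"
    moreover have "sigma_finite_measure (count_space A)"
      using \<open>finite A\<close> by (simp add: sigma_finite_measure_count_space_finite)
    ultimately show ?thesis using count_space_two_unit_sets by auto
  next
    fix d :: nat assume "1 \<le> d" "M v = PiM {..<d} (\<lambda>_. lborel)"
    moreover have "sigma_finite_measure (PiM {..<d} (\<lambda>_. lborel :: real measure))"
      by (intro product_sigma_finite.sigma_finite finite_product_sigma_finite.intro)
        (auto simp: product_sigma_finite_def lborel.sigma_finite_measure_axioms finite_product_sigma_finite_axioms_def)
    ultimately show ?thesis using lborel_PiM_two_unit_sets[OF \<open>1 \<le> d\<close>] by auto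
  qed
  then have "\<exists>B. \<forall>v. sigma_finite_measure (M v) \<and> (\<forall>b. B v b \<in> sets (M v) \<and> emeasure (M v) (B v b) = 1)
      \<and> B v False \<inter> B v True = {}"
    by (intro choice allI)
  then obtain B where "\<forall>v. sigma_finite_measure (M v) \<and> (\<forall>b. B v b \<in> sets (M v) \<and> emeasure (M v) (B v b) = 1)
      \<and> B v False \<inter> B v True = {}"
    by blast
  then have "bit_state_spaces M (\<lambda>b v. B v b)" by (simp add: bit_state_spaces_def)
  then show ?thesis by (rule that)
qed

definition collider :: "'n \<Rightarrow> 'n \<Rightarrow> 'n \<Rightarrow> ('n \<times> 'n) set" where
  "collider s t1 t2 = {(t1, s), (t2, s)}"

lemma pa_collider: "pa (collider s t1 t2) v = (if v = s then {t1, t2} else {})"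
  unfolding pa_def collider_def by auto

lemma acyclic_collider:
  assumes "s \<noteq> t1" "s \<noteq> t2"
  shows "acyclic (collider s t1 t2)"
proof -
  have "trans (collider s t1 t2)" using assms unfolding trans_def collider_def by auto
  then show ?thesis using assms unfolding acyclic_def collider_def by (simp add: trancl_id)
qed

text \<open>The bit of a value of x v is whether it lies in B True v.\<close>
definition xor_kernel ::
  "(bool \<Rightarrow> 'n \<Rightarrow> 'a set) \<Rightarrow> 'n \<Rightarrow> 'n \<Rightarrow> 'n \<Rightarrow> 'n \<Rightarrow> ('n \<Rightarrow> 'a) \<Rightarrow> 'a \<Rightarrow> real" where
  "xor_kernel B s t1 t2 v y z =
    (if v = s then (if (y t1 \<in> B True t1) = (y t2 \<in> B True t2) then indicator (B False s) z
                    else indicator (B True s) z)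
     else if v = t1 \<or> v = t2 then indicator (B False v \<union> B True v) z / 2
     else indicator (B False v) z)"

lemma xor_kernel_cong:
  assumes "v = s \<Longrightarrow> y t1 = y' t1 \<and> y t2 = y' t2"
  shows "xor_kernel B s t1 t2 v y z = xor_kernel B s t1 t2 v y' z"
  using assms unfolding xor_kernel_def by (cases "v = s") simp_all

context bit_state_spaces
begin

lemma space_PiM_not_empty: "space (PiM UNIV M) \<noteq> {}"
proof -
  have "space (M v) \<noteq> {}" for v
    using sets.sets_into_space[OF sets_B[of False v]] emeasure_B[of v False] by auto
  then show ?thesis by (simp add: space_PiM_empty_iff)
qed

lemma mem_B_True_iff: "x \<in> B a v \<Longrightarrow> (x \<in> B True v) = a"
  using disjoint_B[of v] by (cases a) auto

lemma sets_PiE_B [measurable]: "PiE Z (B b) \<in> sets (PiM Z M)"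
  by (intro sets_PiM_I_finite) auto

lemma emeasure_PiE_B: "emeasure (PiM Z M) (PiE Z (B b)) = 1"
proof -
  interpret finite_product_sigma_finite M Z
    by (simp add: finite_product_sigma_finite_def product_sigma_finite_def
        finite_product_sigma_finite_axioms_def sigma_finite)
  show ?thesis by (subst measure_times) (auto simp: emeasure_B)
qed

lemma nn_integral_fair_bit: "(\<integral>\<^sup>+ z. ennreal (indicator (B False v \<union> B True v) z / 2) \<partial>M v) = 1"
proof -
  have "emeasure (M v) (B False v \<union> B True v) = 2"
    using plus_emeasure[OF sets_B sets_B disjoint_B] by (simp add: emeasure_B one_add_one)
  moreover have "ennreal (indicator (B False v \<union> B True v) z / 2) = ennreal (1/2) * indicator (B False v \<union> B True v) z"
    for z by (simp add: indicator_def)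
  moreover have "ennreal (1/2) * 2 = 1"
    using ennreal_mult[of "1/2" 2] by simp
  ultimately show ?thesis by (simp add: nn_integral_cmult_indicator)
qed

lemma measurable_xor_kernel:
  assumes "t1 \<in> pa E s" "t2 \<in> pa E s"
  shows "(\<lambda>(y, z). xor_kernel B s t1 t2 v y z) \<in> borel_measurable (PiM (pa E v) M \<Otimes>\<^sub>M M v)"
proof (cases "v = s")
  case True
  have [measurable]: "Measurable.pred (PiM (pa E s) M) (\<lambda>y. y t \<in> B True t)" if "t \<in> {t1, t2}" for t
  proof -
    have "t \<in> pa E s" using assms that by auto
    then show ?thesis by measurable
  qed
  have eq: "xor_kernel B s t1 t2 s y z = (if (y t1 \<in> B True t1) = (y t2 \<in> B True t2)
      then indicator (B False s) z else indicator (B True s) z)" for y z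
    by (simp add: xor_kernel_def)
  show ?thesis unfolding True eq by measurable
next
  case False
  then have eq: "xor_kernel B s t1 t2 v y z = (if v = t1 \<or> v = t2
      then indicator (B False v \<union> B True v) z / 2 else indicator (B False v) z)" for y z
    by (simp add: xor_kernel_def)
  show ?thesis unfolding eq by measurable
qed

lemma nn_integral_xor_kernel: "(\<integral>\<^sup>+ z. ennreal (xor_kernel B s t1 t2 v y z) \<partial>M v) = 1"
proof -
  consider "v = s" | "v \<noteq> s" "v = t1 \<or> v = t2" | "v \<noteq> s" "v \<noteq> t1" "v \<noteq> t2" by blast
  then show ?thesis
  proof cases
    case 1
    then show ?thesis
      by (cases "(y t1 \<in> B True t1) = (y t2 \<in> B True t2)")
        (simp_all add: xor_kernel_def ennreal_indicator emeasure_B)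
  next
    case 2
    then show ?thesis using nn_integral_fair_bit by (simp add: xor_kernel_def)
  next
    case 3
    then show ?thesis by (simp add: xor_kernel_def ennreal_indicator emeasure_B)
  qed
qed

lemma kernels_xor_kernel:
  assumes "t1 \<in> pa E s" "t2 \<in> pa E s"
  shows "kernels M E (xor_kernel B s t1 t2)"
proof -
  have "0 \<le> xor_kernel B s t1 t2 v y z" for v y z
    unfolding xor_kernel_def by (simp only: split: if_split) simp
  then show ?thesis
    unfolding kernels_def using measurable_xor_kernel[OF assms] nn_integral_xor_kernel by blast
qed

lemma kernel_factor_collider_xor_kernel:
  assumes "s \<noteq> t1" "s \<noteq> t2" "t1 \<noteq> t2" "u s \<in> B False s" "u t1 \<in> B a t1" "u t2 \<in> B b t2"
    and "v \<notin> {s, t1, t2} \<Longrightarrow> u v \<in> B False v"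
  shows "kernel_factor (collider s t1 t2) (xor_kernel B s t1 t2) v u
    = (if v = s then (if a = b then 1 else 0) else if v = t1 \<or> v = t2 then ennreal (1/2) else 1)"
proof -
  consider "v = s" | "v = t1" | "v = t2" | "v \<notin> {s, t1, t2}" by blast
  then show ?thesis
  proof cases
    case 1
    have "(u t1 \<in> B True t1) = a" "(u t2 \<in> B True t2) = b" "u s \<notin> B True s"
      using assms(4-6) mem_B_True_iff by auto
    then show ?thesis using 1 assms(1-4)
      by (cases "a = b") (simp_all add: kernel_factor_def xor_kernel_def pa_collider)
  next
    case 2
    have "u t1 \<in> B False t1 \<union> B True t1" using assms(5) by (cases a) auto
    then show ?thesis using 2 assms(1) by (simp add: kernel_factor_def xor_kernel_def)
  next
    case 3
    have "u t2 \<in> B False t2 \<union> B True t2" using assms(6) by (cases b) auto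
    then show ?thesis using 3 assms(2,3) by (simp add: kernel_factor_def xor_kernel_def)
  next
    case 4
    then show ?thesis using assms(7) by (auto simp: kernel_factor_def xor_kernel_def)
  qed
qed

lemma prod_kernel_factor_collider_xor_kernel:
  assumes Z: "s \<in> Z" "t1 \<notin> Z" "t2 \<notin> Z" "t1 \<noteq> t2"
    and z: "\<And>v. v \<in> Z \<Longrightarrow> z v \<in> B False v" and x: "x1 \<in> B a t1" "x2 \<in> B b t2"
  shows "(\<Prod>v\<in>insert t1 (insert t2 Z). kernel_factor (collider s t1 t2) (xor_kernel B s t1 t2) v (z(t2 := x2, t1 := x1)))
    = (if a = b then ennreal (1/4) else 0)"
proof -
  define f :: "'n \<Rightarrow> ennreal"
    where "f v = (if v = s then (if a = b then 1 else 0) else if v = t1 \<or> v = t2 then ennreal (1/2) else 1)" for v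
  have st: "s \<noteq> t1" "s \<noteq> t2" using Z by auto
  have "(\<Prod>v\<in>insert t1 (insert t2 Z). kernel_factor (collider s t1 t2) (xor_kernel B s t1 t2) v (z(t2 := x2, t1 := x1)))
      = (\<Prod>v\<in>insert t1 (insert t2 Z). f v)"
    using Z st z x unfolding f_def by (intro prod.cong refl kernel_factor_collider_xor_kernel) auto
  also have "\<dots> = f t1 * (f t2 * (\<Prod>v\<in>Z. f v))"
    using Z by simp
  also have "(\<Prod>v\<in>Z. f v) = (\<Prod>v\<in>Z. if v = s then (if a = b then 1 else 0) else 1)"
    using Z by (intro prod.cong) (auto simp: f_def)
  also have "\<dots> = (if a = b then 1 else 0)"
    using Z(1) by (simp add: prod.delta)
  also have "f t1 * (f t2 * (if a = b then 1 else 0)) = ennreal (1/2) * ennreal (1/2) * (if a = b then 1 else 0)"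
    using st Z(4) by (simp add: f_def)
  also have "ennreal (1/2) * ennreal (1/2) = ennreal (1/4)"
    by (subst ennreal_mult[symmetric]) auto
  also have "ennreal (1/4) * (if a = b then 1 else 0) = (if a = b then ennreal (1/4) else 0)"
    by simp
  finally show ?thesis .
qed

lemma xor_law_marginal:
  assumes Z: "s \<in> Z" "t1 \<notin> Z" "t2 \<notin> Z" "t1 \<noteq> t2" and S [measurable]: "S \<in> sets (PiM Z M)"
  defines "W \<equiv> PiE Z (B False)"
  shows "(\<integral>\<^sup>+ x. indicator (S \<inter> W) (restrict x Z) * indicator (B a t1) (x t1) * indicator (B b t2) (x t2)
      \<partial>density (PiM UNIV M) (\<lambda>x. \<Prod>v\<in>UNIV. kernel_factor (collider s t1 t2) (xor_kernel B s t1 t2) v x))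
    = (if a = b then ennreal (1/4) else 0) * emeasure (PiM Z M) (S \<inter> W)"
proof -
  let ?E = "collider s t1 t2" and ?k = "xor_kernel B s t1 t2"
  define c :: ennreal where "c = (if a = b then ennreal (1/4) else 0)"
  have k: "kernels M ?E ?k" by (rule kernels_xor_kernel) (simp_all add: pa_collider)
  have acyclic: "acyclic ?E" using Z by (intro acyclic_collider) auto
  have [measurable]: "(\<lambda>x. \<Prod>v\<in>UNIV. kernel_factor ?E ?k v x) \<in> borel_measurable (PiM UNIV M)"
    by (intro borel_measurable_prod_ennreal measurable_kernel_factor[OF k]) auto
  have [measurable]: "(\<lambda>x. restrict x Z) \<in> measurable (PiM UNIV M) (PiM Z M)"
    by (rule measurable_restrict_subset) simp
  have "(\<integral>\<^sup>+ x. indicator (S \<inter> W) (restrict x Z) * indicator (B a t1) (x t1) * indicator (B b t2) (x t2)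
      \<partial>density (PiM UNIV M) (\<lambda>x. \<Prod>v\<in>UNIV. kernel_factor ?E ?k v x))
    = (\<integral>\<^sup>+ x. (\<Prod>v\<in>UNIV. kernel_factor ?E ?k v x)
      * (indicator (S \<inter> W) (restrict x Z) * indicator (B a t1) (x t1) * indicator (B b t2) (x t2)) \<partial>PiM UNIV M)"
    unfolding W_def by (rule nn_integral_density) measurable
  also have "\<dots> = (\<integral>\<^sup>+ z. (\<integral>\<^sup>+ x2. (\<integral>\<^sup>+ x1. (\<Prod>v\<in>insert t1 (insert t2 Z). kernel_factor ?E ?k v (z(t2 := x2, t1 := x1)))
          * (indicator (S \<inter> W) z * indicator (B a t1) x1 * indicator (B b t2) x2) \<partial>M t1) \<partial>M t2) \<partial>PiM Z M)"
    using Z unfolding W_def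
    by (intro nn_integral_prod_kernel_factor_pair[OF sigma_finite k acyclic _ _ _ _ space_PiM_not_empty])
      (auto simp: pa_collider)
  also have "\<dots> = (\<integral>\<^sup>+ z. (\<integral>\<^sup>+ x2. (\<integral>\<^sup>+ x1.
      (c * indicator (S \<inter> W) z * indicator (B b t2) x2) * indicator (B a t1) x1 \<partial>M t1) \<partial>M t2) \<partial>PiM Z M)"
  proof (intro nn_integral_cong)
    fix z :: "'n \<Rightarrow> 'a" and x1 x2 :: 'a
    show "(\<Prod>v\<in>insert t1 (insert t2 Z). kernel_factor ?E ?k v (z(t2 := x2, t1 := x1)))
        * (indicator (S \<inter> W) z * indicator (B a t1) x1 * indicator (B b t2) x2)
      = (c * indicator (S \<inter> W) z * indicator (B b t2) x2) * indicator (B a t1) x1"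
    proof (cases "z \<in> S \<inter> W \<and> x1 \<in> B a t1 \<and> x2 \<in> B b t2")
      case True
      then have "z v \<in> B False v" if "v \<in> Z" for v
        using that unfolding W_def by blast
      then show ?thesis
        using True prod_kernel_factor_collider_xor_kernel[OF Z] by (simp add: c_def)
    qed auto
  qed
  also have "\<dots> = (\<integral>\<^sup>+ z. c * indicator (S \<inter> W) z \<partial>PiM Z M)"
    by (simp add: nn_integral_cmult_indicator emeasure_B)
  also have "\<dots> = c * emeasure (PiM Z M) (S \<inter> W)"
    unfolding W_def by (simp add: nn_integral_cmult_indicator)
  finally show ?thesis unfolding c_def .
qed

end

lemma xor_law_in_dag_model:
  fixes E :: "('n::finite \<times> 'n) set" and M :: "'n \<Rightarrow> (nat \<Rightarrow> real) measure"
  assumes "bit_state_spaces M B" "acyclic E" "t1 \<in> pa E s" "t2 \<in> pa E s"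
  shows "density (PiM UNIV M) (\<lambda>x. \<Prod>v\<in>UNIV. kernel_factor (collider s t1 t2) (xor_kernel B s t1 t2) v x)
    \<in> dag_model M E"
proof -
  interpret bit_state_spaces M B by fact
  have "kernel_factor E (xor_kernel B s t1 t2) v x = kernel_factor (collider s t1 t2) (xor_kernel B s t1 t2) v x"
    for v x
    unfolding kernel_factor_def using assms(3,4)
    by (intro arg_cong[where f = ennreal] xor_kernel_cong) (auto simp: pa_collider)
  then show ?thesis
    using density_prod_kernel_factor_in_dag_model[OF sigma_finite kernels_xor_kernel[OF assms(3,4)]
        assms(2) space_PiM_not_empty] by simp
qed

section \<open>Adjacency of parents with a common child\<close>

text \<open>On W, two bits with joint density \<Phi> a \<cdot> \<Psi> b (conditionally independent) cannot be almost
  surely equal with both values of positive probability.\<close>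
lemma diagonal_law_not_product:
  fixes N :: "'z measure" and \<Phi> \<Psi> :: "bool \<Rightarrow> 'z \<Rightarrow> ennreal"
  assumes W: "W \<in> sets N" "emeasure N W \<noteq> 0"
    and [measurable]: "\<And>a. \<Phi> a \<in> borel_measurable N" "\<And>b. \<Psi> b \<in> borel_measurable N"
    and c: "c \<noteq> 0"
    and law: "\<And>S a b. S \<in> sets N \<Longrightarrow>
      (\<integral>\<^sup>+ z. indicator (S \<inter> W) z * (\<Phi> a z * \<Psi> b z) \<partial>N) = (if a = b then c else 0) * emeasure N (S \<inter> W)"
  shows False
proof -
  have diagonal: "AE z in N. z \<in> W \<longrightarrow> \<Phi> a z * \<Psi> a z \<noteq> 0" for a
  proof -
    define S where "S = {z \<in> space N. \<Phi> a z * \<Psi> a z = 0}"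
    have [measurable]: "S \<in> sets N" unfolding S_def by measurable
    have "(\<integral>\<^sup>+ z. indicator (S \<inter> W) z * (\<Phi> a z * \<Psi> a z) \<partial>N) = 0"
      by (rule nn_integral_zero') (auto simp: S_def indicator_def)
    then have "S \<inter> W \<in> null_sets N" using law[of S a a] c W(1) by auto
    then show ?thesis by (rule AE_I') (auto simp: S_def)
  qed
  have "(\<integral>\<^sup>+ z. indicator W z * (\<Phi> False z * \<Psi> True z) \<partial>N) = 0"
    using law[of "space N" False True] sets.Int_space_eq1[OF W(1)] by simp
  then have "AE z in N. indicator W z * (\<Phi> False z * \<Psi> True z) = 0"
    using W(1) by (subst (asm) nn_integral_0_iff_AE) auto
  then have "AE z in N. z \<notin> W"
    using diagonal[of False] diagonal[of True] by eventually_elim (auto simp: indicator_def)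
  then have "W \<in> null_sets N" using AE_iff_null_sets[OF W(1)] by simp
  then show False using W(2) by auto
qed

lemma measurable_nn_integral_fun_upd:
  assumes "sigma_finite_measure (M i)" and [measurable]: "f \<in> borel_measurable (PiM (insert i I) M)"
    and [measurable]: "g \<in> borel_measurable (M i)"
  shows "(\<lambda>z. \<integral>\<^sup>+ x. g x * f (z(i := x)) \<partial>M i) \<in> borel_measurable (PiM I M)"
proof -
  have "(\<lambda>(z, x). g x * f (z(i := x))) \<in> borel_measurable (PiM I M \<Otimes>\<^sub>M M i)"
    by measurable
  from sigma_finite_measure.borel_measurable_nn_integral_fst[OF assms(1) this] show ?thesis by simp
qed

lemma parents_adjacent_of_dag_model_subset:
  fixes E E' :: "('n::finite \<times> 'n) set" and M :: "'n \<Rightarrow> (nat \<Rightarrow> real) measure"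
  assumes "state_spaces M" and acyclic: "acyclic E" "acyclic E'"
    and subset: "dag_model M E \<subseteq> dag_model M E'" and converse: "E\<inverse> \<subseteq> E'"
    and parents: "t1 \<in> pa E s" "t2 \<in> pa E s" "t1 \<noteq> t2"
  shows "(t1, t2) \<in> E' \<or> (t2, t1) \<in> E'"
proof (rule ccontr)
  assume nonadjacent: "\<not> ?thesis"
  obtain B where bits: "bit_state_spaces M B" using state_spaces_bit_state_spaces[OF assms(1)] .
  interpret bit_state_spaces M B by (fact bits)
  define P where "P = density (PiM UNIV M) (\<lambda>x. \<Prod>v\<in>UNIV. kernel_factor (collider s t1 t2) (xor_kernel B s t1 t2) v x)"
  have "P \<in> dag_model M E'"
    using subset xor_law_in_dag_model[OF bits acyclic(1) parents(1,2)] unfolding P_def by blast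
  define Z where "Z = ancestors E' {t1, t2} - {t1, t2}"
  obtain \<phi> \<psi> where [measurable]: "\<phi> \<in> borel_measurable (PiM (insert t1 Z) M)"
      "\<psi> \<in> borel_measurable (PiM (insert t2 Z) M)"
    and cond_indep: "\<And>(h :: ('n \<Rightarrow> nat \<Rightarrow> real) \<Rightarrow> ennreal) f1 f2. h \<in> borel_measurable (PiM Z M) \<Longrightarrow>
      f1 \<in> borel_measurable (M t1) \<Longrightarrow> f2 \<in> borel_measurable (M t2) \<Longrightarrow>
      (\<integral>\<^sup>+ x. h (restrict x Z) * f1 (x t1) * f2 (x t2) \<partial>P)
      = (\<integral>\<^sup>+ z. h z * (\<integral>\<^sup>+ x1. f1 x1 * \<phi> (z(t1 := x1)) \<partial>M t1) * (\<integral>\<^sup>+ x2. f2 x2 * \<psi> (z(t2 := x2)) \<partial>M t2) \<partial>PiM Z M)"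
    using dag_model_cond_indep[OF sigma_finite \<open>P \<in> dag_model M E'\<close> acyclic(2) parents(3) _ _ space_PiM_not_empty]
      nonadjacent unfolding Z_def by blast
  have "s \<noteq> t1" "s \<noteq> t2" using parents not_in_pa_self[OF acyclic(1)] by (auto simp: pa_def)
  moreover have "(s, t1) \<in> E'" using converse parents(1) unfolding pa_def by blast
  then have "s \<in> ancestors E' {t1, t2}" unfolding ancestors_def by blast
  ultimately have Z: "s \<in> Z" "t1 \<notin> Z" "t2 \<notin> Z" "t1 \<noteq> t2" using parents(3) by (auto simp: Z_def)
  define \<Phi> where "\<Phi> a z = (\<integral>\<^sup>+ x1. indicator (B a t1) x1 * \<phi> (z(t1 := x1)) \<partial>M t1)" for a z
  define \<Psi> where "\<Psi> b z = (\<integral>\<^sup>+ x2. indicator (B b t2) x2 * \<psi> (z(t2 := x2)) \<partial>M t2)" for b z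
  have "(\<integral>\<^sup>+ z. indicator (S \<inter> PiE Z (B False)) z * (\<Phi> a z * \<Psi> b z) \<partial>PiM Z M)
      = (if a = b then ennreal (1/4) else 0) * emeasure (PiM Z M) (S \<inter> PiE Z (B False))"
    if [measurable]: "S \<in> sets (PiM Z M)" for S a b
  proof -
    have "(\<integral>\<^sup>+ z. indicator (S \<inter> PiE Z (B False)) z * (\<Phi> a z * \<Psi> b z) \<partial>PiM Z M)
      = (\<integral>\<^sup>+ x. indicator (S \<inter> PiE Z (B False)) (restrict x Z) * indicator (B a t1) (x t1)
          * indicator (B b t2) (x t2) \<partial>P)"
      unfolding \<Phi>_def \<Psi>_def by (subst cond_indep) (simp_all add: mult.assoc)
    also have "\<dots> = (if a = b then ennreal (1/4) else 0) * emeasure (PiM Z M) (S \<inter> PiE Z (B False))"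
      unfolding P_def by (rule xor_law_marginal[OF Z]) measurable
    finally show ?thesis .
  qed
  moreover have "\<Phi> a \<in> borel_measurable (PiM Z M)" "\<Psi> a \<in> borel_measurable (PiM Z M)" for a
    unfolding \<Phi>_def \<Psi>_def by (intro measurable_nn_integral_fun_upd sigma_finite; measurable)+
  ultimately show False
    using emeasure_PiE_B[of Z False]
    by (intro diagonal_law_not_product[of "PiE Z (B False)" "PiM Z M" \<Phi> \<Psi> "ennreal (1/4)"]) auto
qed

theorem proposition2:
  fixes E E' :: "('n::finite \<times> 'n) set"
    and M :: "'n \<Rightarrow> (nat \<Rightarrow> real) measure"
  assumes "state_spaces M"
    and "acyclic E" and "acyclic E'"
    and "dag_model M E \<subseteq> dag_model M E'"
    and "E\<inverse> \<subseteq> E'"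
  shows "moral E \<subseteq> undirected E'"
proof (rule subrelI)
  fix t1 t2 assume moral: "(t1, t2) \<in> moral E"
  show "(t1, t2) \<in> undirected E'"
  proof (cases "(t1, t2) \<in> E \<union> E\<inverse>")
    case True
    then show ?thesis using assms(5) by (auto simp: undirected_def)
  next
    case False
    then obtain s where "t1 \<in> pa E s" "t2 \<in> pa E s" "t1 \<noteq> t2"
      using moral unfolding moral_def by auto
    then show ?thesis
      using parents_adjacent_of_dag_model_subset[OF assms] by (auto simp: undirected_def)
  qed
qed

end
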